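(* Let $n\ge 2$, $t\ge 1$ be integers and $q$ a prime power, and let $\mathcal{D}$ be the Desarguesian $(t-1)$-spread of $\mathrm{PG}(nt-1,q)$. Let $B$ be a minimal blocking set with respect to the hyperplanes of $\mathrm{PG}(n-1,q^t)$. Then there exists a minimal blocking set $B'$ with respect to $(nt-t-1)$-dimensional subspaces of $\mathrm{PG}(nt-1,q)$ such that $B=\mathcal{B}(B')$.
   Context: Field reduction: each point of $\mathrm{PG}(n-1,q^t)$ is a $1$-dimensional $\mathbb{F}_{q^t}$-subspace of $\mathbb{F}_{q^t}^n$, hence a $t$-dimensional $\mathbb{F}_q$-subspace of $\mathbb{F}_q^{nt}$, i.e. a $(t-1)$-dimensional subspace of $\mathrm{PG}(nt-1,q)$; the set $\mathcal{D}$ of these $(t-1)$-spaces partitions the points of $\mathrm{PG}(nt-1,q)$ (the Desarguesian $(t-1)$-spread). For $U\subseteq\mathrm{PG}(nt-1,q)$, $\mathcal{B}(U)$ is the set of elements of $\mathcal{D}$ meeting $U$, identified with the corresponding points of $\mathrm{PG}(n-1,q^t)$. A blocking set with respect to $j$-spaces is a point set meeting every $j$-dimensional subspace; minimal means no proper subset is such a blocking set. *)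

theory Defs
  imports Main
begin

text \<open>K is a finite field (the type 'a), F \<subseteq> K a subfield with
 |F| = q, |K| = q^t. The ambient space is K^n, realised as functions nat \<Rightarrow> 'a supported on
 {..<n}. Subspaces over a subfield S (S = UNIV gives K-subspaces, S = F gives F-subspaces);
 projective dimension j corresponds to vector dimension j+1.\<close>

definition subfield :: "'a::field set \<Rightarrow> bool" where
  "subfield F \<longleftrightarrow> 0 \<in> F \<and> 1 \<in> F \<and> (\<forall>x\<in>F. \<forall>y\<in>F. x + y \<in> F \<and> x * y \<in> F)
     \<and> (\<forall>x\<in>F. - x \<in> F \<and> inverse x \<in> F)"

definition vecs :: "nat \<Rightarrow> (nat \<Rightarrow> 'a::field) set" where
  "vecs n = {v. \<forall>i\<ge>n. v i = 0}"

definition vzero :: "nat \<Rightarrow> 'a::field" where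
  "vzero = (\<lambda>_. 0)"

definition vadd :: "(nat \<Rightarrow> 'a::field) \<Rightarrow> (nat \<Rightarrow> 'a) \<Rightarrow> (nat \<Rightarrow> 'a)" where
  "vadd x y = (\<lambda>i. x i + y i)"

definition vsmult :: "'a::field \<Rightarrow> (nat \<Rightarrow> 'a) \<Rightarrow> (nat \<Rightarrow> 'a)" where
  "vsmult c x = (\<lambda>i. c * x i)"

definition subsp :: "'a::field set \<Rightarrow> nat \<Rightarrow> (nat \<Rightarrow> 'a) set \<Rightarrow> bool" where
  "subsp S n W \<longleftrightarrow> W \<subseteq> vecs n \<and> vzero \<in> W \<and> (\<forall>x\<in>W. \<forall>y\<in>W. vadd x y \<in> W)
     \<and> (\<forall>c\<in>S. \<forall>x\<in>W. vsmult c x \<in> W)"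

definition lin_comb :: "(nat \<Rightarrow> 'a::field) set \<Rightarrow> ((nat \<Rightarrow> 'a) \<Rightarrow> 'a) \<Rightarrow> (nat \<Rightarrow> 'a)" where
  "lin_comb A c = (\<lambda>i. \<Sum>a\<in>A. c a * a i)"

definition span_over :: "'a::field set \<Rightarrow> (nat \<Rightarrow> 'a) set \<Rightarrow> (nat \<Rightarrow> 'a) set" where
  "span_over S A = {v. \<exists>c. (\<forall>a\<in>A. c a \<in> S) \<and> v = lin_comb A c}"

definition indep_over :: "'a::field set \<Rightarrow> (nat \<Rightarrow> 'a) set \<Rightarrow> bool" where
  "indep_over S A \<longleftrightarrow> (\<forall>c. (\<forall>a\<in>A. c a \<in> S) \<longrightarrow> lin_comb A c = vzero \<longrightarrow> (\<forall>a\<in>A. c a = 0))"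

definition has_dim :: "'a::field set \<Rightarrow> nat \<Rightarrow> (nat \<Rightarrow> 'a) set \<Rightarrow> nat \<Rightarrow> bool" where
  "has_dim S n W d \<longleftrightarrow> subsp S n W \<and>
     (\<exists>A. finite A \<and> A \<subseteq> W \<and> card A = d \<and> indep_over S A \<and> span_over S A = W)"

text \<open>Points of the projective space PG(n-1,K) (S = UNIV) resp. PG(nt-1,F) (S = F).\<close>
definition proj_points :: "'a::field set \<Rightarrow> nat \<Rightarrow> (nat \<Rightarrow> 'a) set set" where
  "proj_points S n = {P. has_dim S n P 1}"

text \<open>B meets every subspace of vector dimension d (= projective dimension d-1).\<close>
definition blocks :: "'a::field set \<Rightarrow> nat \<Rightarrow> nat \<Rightarrow> (nat \<Rightarrow> 'a) set set \<Rightarrow> bool" where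
  "blocks S n d B \<longleftrightarrow> B \<subseteq> proj_points S n \<and> (\<forall>W. has_dim S n W d \<longrightarrow> (\<exists>P\<in>B. P \<subseteq> W))"

definition min_blocking :: "'a::field set \<Rightarrow> nat \<Rightarrow> nat \<Rightarrow> (nat \<Rightarrow> 'a) set set \<Rightarrow> bool" where
  "min_blocking S n d B \<longleftrightarrow> blocks S n d B \<and> (\<forall>B0. B0 \<subset> B \<longrightarrow> \<not> blocks S n d B0)"

text \<open>Field reduction: a K-point P (a 1-dim K-subspace) is, as an F-subspace, an element of the
 Desarguesian spread. \<B>(U) = the spread elements meeting U, i.e. K-points containing an F-point of U.\<close>
definition BU :: "nat \<Rightarrow> (nat \<Rightarrow> 'a::field) set set \<Rightarrow> (nat \<Rightarrow> 'a) set set" where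
  "BU n U = {P \<in> proj_points UNIV n. \<exists>Q\<in>U. Q \<subseteq> P}"

end

theory Submission
  imports Defs "HOL-Library.FuncSet"
begin

text \<open>Write \<open>K\<close> for the field type and \<open>V = K\<^sup>n\<close>, an \<open>F\<close>-space of dimension \<open>n t\<close>. Let \<open>B''\<close> be the
  set of \<open>F\<close>-points lying on points of \<open>B\<close>. It blocks every \<open>F\<close>-subspace \<open>W\<close> of codimension \<open>t\<close>:
  \<open>W\<close> lies in a maximal proper \<open>F\<close>-subspace \<open>M\<close>, and \<open>M\<close> contains a \<open>K\<close>-hyperplane, since the
  largest \<open>K\<close>-subspace of \<open>M\<close> is cut out by the \<open>t\<close> \<open>F\<close>-linear forms \<open>x \<mapsto> \<pi>(e x)\<close>, where \<open>\<pi>\<close> is a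
  form with kernel \<open>M\<close> and \<open>e\<close> runs through an \<open>F\<close>-basis of \<open>K\<close>. Some point \<open>P\<close> of \<open>B\<close> lies in that
  hyperplane, and \<open>P\<close> and \<open>W\<close> are subspaces of \<open>M \<noteq> V\<close> with \<open>|P| |W| = |V|\<close>, so they share an
  \<open>F\<close>-point. Now choose a minimal blocking \<open>B' \<subseteq> B''\<close>. Each point of \<open>\<B>(B')\<close> meets a point of
  \<open>B\<close> in an \<open>F\<close>-point and hence equals it, and \<open>\<B>(B')\<close> blocks the \<open>K\<close>-hyperplanes, which are
  \<open>F\<close>-subspaces of codimension \<open>t\<close>. So \<open>\<B>(B') \<subseteq> B\<close> is blocking, and minimality of \<open>B\<close> gives equality.\<close>

section \<open>Vectors and subspaces over a subfield\<close>

lemma vadd_apply: "vadd x y i = x i + y i" by (simp add: vadd_def)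
lemma vsmult_apply: "vsmult c x i = c * x i" by (simp add: vsmult_def)
lemma vzero_apply: "vzero i = 0" by (simp add: vzero_def)
lemma lin_comb_apply: "lin_comb A c i = (\<Sum>a\<in>A. c a * a i)" by (simp add: lin_comb_def)
lemmas vec_simps = vadd_apply vsmult_apply vzero_apply lin_comb_apply

lemma subfield_zero: "subfield S \<Longrightarrow> 0 \<in> S" by (simp add: subfield_def)
lemma subfield_one: "subfield S \<Longrightarrow> 1 \<in> S" by (simp add: subfield_def)
lemma subfield_add: "subfield S \<Longrightarrow> x \<in> S \<Longrightarrow> y \<in> S \<Longrightarrow> x + y \<in> S" by (simp add: subfield_def)
lemma subfield_mult: "subfield S \<Longrightarrow> x \<in> S \<Longrightarrow> y \<in> S \<Longrightarrow> x * y \<in> S" by (simp add: subfield_def)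
lemma subfield_uminus: "subfield S \<Longrightarrow> x \<in> S \<Longrightarrow> - x \<in> S" by (simp add: subfield_def)
lemma subfield_inverse: "subfield S \<Longrightarrow> x \<in> S \<Longrightarrow> inverse x \<in> S" by (simp add: subfield_def)
lemma subfield_diff: "subfield S \<Longrightarrow> x \<in> S \<Longrightarrow> y \<in> S \<Longrightarrow> x - y \<in> S"
  by (metis subfield_add subfield_uminus diff_conv_add_uminus)
lemma subfield_divide: "subfield S \<Longrightarrow> x \<in> S \<Longrightarrow> y \<in> S \<Longrightarrow> x / y \<in> S"
  by (metis subfield_mult subfield_inverse divide_inverse)
lemma subfield_UNIV: "subfield UNIV" by (simp add: subfield_def)

lemma two_le_card_subfield:
  assumes "subfield (S :: 'a::{field,finite} set)"
  shows "2 \<le> card S"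
proof -
  have "{0, 1} \<subseteq> S" using subfield_zero[OF assms] subfield_one[OF assms] by blast
  then have "card {0::'a, 1} \<le> card S" by (intro card_mono) auto
  then show ?thesis by simp
qed

lemma mem_vecs_iff: "v \<in> vecs n \<longleftrightarrow> (\<forall>i\<ge>n. v i = 0)" by (simp add: vecs_def)
lemma vadd_in_vecs: "x \<in> vecs n \<Longrightarrow> y \<in> vecs n \<Longrightarrow> vadd x y \<in> vecs n"
  by (simp add: mem_vecs_iff vec_simps)
lemma vsmult_in_vecs: "v \<in> vecs n \<Longrightarrow> vsmult c v \<in> vecs n"
  by (simp add: mem_vecs_iff vec_simps)
lemma vdiff_in_vecs: "x \<in> vecs n \<Longrightarrow> y \<in> vecs n \<Longrightarrow> (\<lambda>i. x i - y i) \<in> vecs n"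
  by (simp add: mem_vecs_iff)

lemma vsmult_one [simp]: "vsmult 1 v = v" by (rule ext) (simp add: vec_simps)
lemma vsmult_zero [simp]: "vsmult 0 v = vzero" by (rule ext) (simp add: vec_simps)
lemma vsmult_vzero [simp]: "vsmult c vzero = vzero" by (rule ext) (simp add: vec_simps)
lemma vsmult_vsmult [simp]: "vsmult a (vsmult b v) = vsmult (a * b) v" by (rule ext) (simp add: vec_simps)

lemma vsmult_eq_vzero_imp:
  assumes "vsmult c v = vzero" "v \<noteq> vzero"
  shows "c = 0"
proof -
  obtain i where "v i \<noteq> 0" using assms(2) by (auto simp: fun_eq_iff vzero_apply)
  moreover have "c * v i = 0" using fun_cong[OF assms(1), of i] by (simp add: vec_simps)
  ultimately show ?thesis by simp
qed

lemma vecs_eq_image_PiE: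
  "vecs n = (\<lambda>g i. if i < n then g i else 0) ` ({..<n} \<rightarrow>\<^sub>E (UNIV :: 'a::field set))"
proof
  show "vecs n \<subseteq> (\<lambda>g i. if i < n then g i else 0) ` ({..<n} \<rightarrow>\<^sub>E (UNIV :: 'a set))"
  proof
    fix v :: "nat \<Rightarrow> 'a" assume v: "v \<in> vecs n"
    have "restrict v {..<n} \<in> {..<n} \<rightarrow>\<^sub>E (UNIV :: 'a set)" by simp
    moreover have "v = (\<lambda>i. if i < n then restrict v {..<n} i else 0)"
      using v by (auto simp: mem_vecs_iff)
    ultimately show "v \<in> (\<lambda>g i. if i < n then g i else 0) ` ({..<n} \<rightarrow>\<^sub>E UNIV)"
      by (rule image_eqI[where f = "\<lambda>g i. if i < n then g i else (0::'a)", rotated])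
  qed
  show "(\<lambda>g i. if i < n then g i else 0) ` ({..<n} \<rightarrow>\<^sub>E (UNIV :: 'a set)) \<subseteq> vecs n"
  proof
    fix v assume "v \<in> (\<lambda>g i. if i < n then g i else 0) ` ({..<n} \<rightarrow>\<^sub>E (UNIV :: 'a set))"
    then obtain g where "v = (\<lambda>i. if i < n then g i else 0)" by (rule imageE)
    then show "v \<in> vecs n" by (simp add: mem_vecs_iff)
  qed
qed

lemma inj_on_extend_zero:
  "inj_on (\<lambda>g (i::nat). if i < n then g i else (0::'a::field)) ({..<n} \<rightarrow>\<^sub>E UNIV)"
proof (rule inj_onI)
  fix f g :: "nat \<Rightarrow> 'a" assume f: "f \<in> {..<n} \<rightarrow>\<^sub>E UNIV" and g: "g \<in> {..<n} \<rightarrow>\<^sub>E UNIV"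
    and e: "(\<lambda>i. if i < n then f i else 0) = (\<lambda>i. if i < n then g i else 0)"
  show "f = g"
  proof (rule PiE_ext[OF f g])
    fix i assume "i \<in> {..<n}" then show "f i = g i" using fun_cong[OF e, of i] by simp
  qed
qed

lemma finite_vecs: "finite (vecs n :: (nat \<Rightarrow> 'a::{field,finite}) set)"
  by (simp add: vecs_eq_image_PiE finite_PiE)

lemma card_vecs: "card (vecs n :: (nat \<Rightarrow> 'a::{field,finite}) set) = card (UNIV :: 'a set) ^ n"
  by (simp add: vecs_eq_image_PiE card_image[OF inj_on_extend_zero] card_PiE)

lemma subsp_add: "subsp S n W \<Longrightarrow> x \<in> W \<Longrightarrow> y \<in> W \<Longrightarrow> vadd x y \<in> W" by (simp add: subsp_def)
lemma subsp_smult: "subsp S n W \<Longrightarrow> c \<in> S \<Longrightarrow> x \<in> W \<Longrightarrow> vsmult c x \<in> W" by (simp add: subsp_def)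
lemma subsp_zero: "subsp S n W \<Longrightarrow> vzero \<in> W" by (simp add: subsp_def)
lemma subsp_subset_vecs: "subsp S n W \<Longrightarrow> W \<subseteq> vecs n" by (simp add: subsp_def)
lemma subsp_vecs: "subsp S n (vecs n)"
  by (auto simp: subsp_def mem_vecs_iff vec_simps)
lemma subsp_UNIV_imp_subsp: "subsp UNIV n W \<Longrightarrow> subsp S n W"
  unfolding subsp_def by blast

lemma finite_subsp: "subsp S n W \<Longrightarrow> finite (W :: (nat \<Rightarrow> 'a::{field,finite}) set)"
  using finite_vecs subsp_subset_vecs finite_subset by metis

lemma subsp_diff:
  assumes "subfield S" "subsp S n W" "x \<in> W" "y \<in> W"
  shows "(\<lambda>i. x i - y i) \<in> W"
proof -
  have "vadd x (vsmult (- 1) y) \<in> W"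
    using assms by (metis subsp_add subsp_smult subfield_uminus subfield_one)
  moreover have "vadd x (vsmult (- 1) y) = (\<lambda>i. x i - y i)" by (rule ext) (simp add: vec_simps)
  ultimately show ?thesis by simp
qed

section \<open>Linear combinations and dimension counting\<close>

lemma lin_comb_insert:
  "finite A \<Longrightarrow> a \<notin> A \<Longrightarrow> lin_comb (insert a A) c = vadd (vsmult (c a) a) (lin_comb A c)"
  by (rule ext) (simp add: vec_simps)

lemma lin_comb_singleton: "lin_comb {a} c = vsmult (c a) a"
  by (rule ext) (simp add: vec_simps)

lemma lin_comb_restrict: "lin_comb A (restrict c A) = lin_comb A c"
  unfolding lin_comb_def by (rule ext) (rule sum.cong, auto)

lemma lin_comb_in_subsp:
  assumes "subsp S n W" "finite A" "A \<subseteq> W" "\<forall>a\<in>A. c a \<in> S"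
  shows "lin_comb A c \<in> W"
  using assms(2-4)
proof (induction A rule: finite_induct)
  case empty
  then show ?case using subsp_zero[OF assms(1)] by (simp add: vzero_def lin_comb_def)
next
  case (insert x F)
  then show ?case using assms(1) by (simp add: lin_comb_insert subsp_add subsp_smult)
qed

lemma span_over_subset: "subsp S n W \<Longrightarrow> finite A \<Longrightarrow> A \<subseteq> W \<Longrightarrow> span_over S A \<subseteq> W"
  unfolding span_over_def using lin_comb_in_subsp by blast

lemma span_over_eq_image: "span_over S A = lin_comb A ` (A \<rightarrow>\<^sub>E S)"
proof
  show "span_over S A \<subseteq> lin_comb A ` (A \<rightarrow>\<^sub>E S)"
  proof
    fix v assume "v \<in> span_over S A"
    then obtain c where c: "\<forall>a\<in>A. c a \<in> S" "v = lin_comb A c" by (auto simp: span_over_def)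
    then show "v \<in> lin_comb A ` (A \<rightarrow>\<^sub>E S)"
      by (intro image_eqI[where x = "restrict c A"]) (auto simp: lin_comb_restrict)
  qed
qed (auto simp: span_over_def PiE_iff)

lemma mem_span_over:
  assumes "subfield S" "finite A" "a \<in> A"
  shows "a \<in> span_over S A"
proof -
  let ?c = "\<lambda>x. if x = a then 1 else 0"
  have "lin_comb A ?c = a"
  proof (rule ext)
    fix i
    have "lin_comb A ?c i = (\<Sum>x\<in>A. if x = a then a i else 0)"
      unfolding lin_comb_apply by (rule sum.cong) auto
    then show "lin_comb A ?c i = a i" using assms(2,3) by simp
  qed
  moreover have "\<forall>x\<in>A. ?c x \<in> S" using subfield_zero[OF assms(1)] subfield_one[OF assms(1)] by simp
  ultimately show ?thesis unfolding span_over_def by force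
qed

lemma inj_on_lin_comb:
  assumes "subfield S" "indep_over S A"
  shows "inj_on (lin_comb A) (A \<rightarrow>\<^sub>E S)"
proof (rule inj_onI)
  fix c d assume c: "c \<in> A \<rightarrow>\<^sub>E S" and d: "d \<in> A \<rightarrow>\<^sub>E S" and e: "lin_comb A c = lin_comb A d"
  have "lin_comb A (\<lambda>a. c a - d a) = vzero"
    using e by (intro ext) (simp add: vec_simps left_diff_distrib sum_subtractf fun_eq_iff)
  moreover have "\<forall>a\<in>A. c a - d a \<in> S" using c d assms(1) by (auto intro: subfield_diff)
  ultimately have "\<forall>a\<in>A. c a - d a = 0"
    using assms(2)[unfolded indep_over_def, rule_format, of "\<lambda>a. c a - d a"] by blast
  then show "c = d" by (intro PiE_ext[OF c d]) simp
qed

lemma card_span_over: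
  assumes "subfield S" "finite S" "finite A" "indep_over S A"
  shows "card (span_over S A) = card S ^ card A"
  unfolding span_over_eq_image card_image[OF inj_on_lin_comb[OF assms(1,4)]]
  using card_PiE[OF assms(3), of "\<lambda>_. S"] by simp

lemma card_has_dim:
  assumes "subfield S" "finite S" "has_dim S n W d"
  shows "card W = card S ^ d"
proof -
  obtain A where "finite A" "card A = d" "indep_over S A" "span_over S A = W"
    using assms(3) unfolding has_dim_def by blast
  then show ?thesis using card_span_over[OF assms(1,2)] by blast
qed

lemma indep_over_insert:
  assumes "subfield S" "finite A" "indep_over S A" "v \<notin> span_over S A"
  shows "indep_over S (insert v A)"
  unfolding indep_over_def
proof (intro allI impI)
  fix c assume cS: "\<forall>a\<in>insert v A. c a \<in> S" and z: "lin_comb (insert v A) c = vzero"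
  have vA: "v \<notin> A" using mem_span_over assms by blast
  have comb: "c v * v i + lin_comb A c i = 0" for i
    using fun_cong[OF z, of i] by (simp add: vec_simps sum.insert[OF assms(2) vA])
  have cv: "c v = 0"
  proof (rule ccontr)
    assume ne: "c v \<noteq> 0"
    have "v = lin_comb A (\<lambda>a. - c a / c v)"
    proof (rule ext)
      fix i
      have "lin_comb A (\<lambda>a. - c a / c v) i = - lin_comb A c i / c v"
        by (simp add: lin_comb_apply sum_divide_distrib sum_negf)
      also have "\<dots> = v i" using comb[of i] ne by (simp add: add_eq_0_iff)
      finally show "v i = lin_comb A (\<lambda>a. - c a / c v) i" by simp
    qed
    moreover have "\<forall>a\<in>A. - c a / c v \<in> S"
      using cS assms(1) by (auto intro!: subfield_divide subfield_uminus)
    ultimately have "\<exists>d. (\<forall>a\<in>A. d a \<in> S) \<and> v = lin_comb A d"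
      by (intro exI[of _ "\<lambda>a. - c a / c v"]) blast
    then have "v \<in> span_over S A" by (simp add: span_over_def)
    with assms(4) show False by simp
  qed
  have "lin_comb A c = vzero" using comb cv by (intro ext) (simp add: vec_simps)
  then have "\<forall>a\<in>A. c a = 0" using assms(3) cS unfolding indep_over_def by blast
  then show "\<forall>a\<in>insert v A. c a = 0" using cv by blast
qed

lemma exists_basis:
  fixes W :: "(nat \<Rightarrow> 'a::{field,finite}) set"
  assumes "subfield S" "subsp S n W"
  shows "\<exists>A. finite A \<and> A \<subseteq> W \<and> indep_over S A \<and> span_over S A = W"
proof -
  let ?I = "{A. A \<subseteq> W \<and> indep_over S A}"
  have fW: "finite W" using finite_subsp[OF assms(2)] .
  have "?I \<subseteq> Pow W" by blast
  then have fI: "finite ?I" using fW finite_subset by blast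
  have "{} \<in> ?I" unfolding indep_over_def by simp
  define m where "m = Max (card ` ?I)"
  have "m \<in> card ` ?I" unfolding m_def using fI \<open>{} \<in> ?I\<close> by (intro Max_in) auto
  then obtain A where A: "A \<in> ?I" "card A = m" by blast
  have Amax: "card B \<le> card A" if "B \<in> ?I" for B
    using A(2) fI that unfolding m_def by (simp add: Max_ge)
  have AW: "A \<subseteq> W" and Ai: "indep_over S A" using A by auto
  have fA: "finite A" using AW fW finite_subset by blast
  have "W \<subseteq> span_over S A"
  proof
    fix v assume vW: "v \<in> W"
    show "v \<in> span_over S A"
    proof (rule ccontr)
      assume nv: "v \<notin> span_over S A"
      have "insert v A \<in> ?I" using indep_over_insert[OF assms(1) fA Ai nv] AW vW by blast
      then have "card (insert v A) \<le> card A" by (rule Amax)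
      moreover have "v \<notin> A" using nv mem_span_over[OF assms(1) fA] by blast
      ultimately show False using fA by simp
    qed
  qed
  then have "span_over S A = W" using span_over_subset[OF assms(2) fA AW] by (rule subset_antisym[rotated])
  then show ?thesis using fA AW Ai by blast
qed

lemma has_dim_iff_card:
  fixes W :: "(nat \<Rightarrow> 'a::{field,finite}) set"
  assumes "subfield S" "subsp S n W"
  shows "has_dim S n W d \<longleftrightarrow> card W = card S ^ d"
proof
  assume "card W = card S ^ d"
  obtain A where A: "finite A" "A \<subseteq> W" "indep_over S A" "span_over S A = W"
    using exists_basis[OF assms] by blast
  have "card S ^ card A = card S ^ d"
    using card_span_over[OF assms(1) finite A(1,3)] A(4) \<open>card W = card S ^ d\<close> by simp
  then have "card A = d" using two_le_card_subfield[OF assms(1)] by (simp add: power_inject_exp)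
  then show "has_dim S n W d" unfolding has_dim_def using assms(2) A by blast
qed (rule card_has_dim[OF assms(1) finite])

lemma subsp_card_eq_power:
  fixes W :: "(nat \<Rightarrow> 'a::{field,finite}) set"
  assumes "subfield S" "subsp S n W"
  shows "\<exists>d. card W = card S ^ d"
proof -
  obtain A where "finite A" "indep_over S A" "span_over S A = W"
    using exists_basis[OF assms] by blast
  then show ?thesis using card_span_over[OF assms(1) finite] by blast
qed

section \<open>Projective points\<close>

definition line :: "'a::field set \<Rightarrow> (nat \<Rightarrow> 'a) \<Rightarrow> (nat \<Rightarrow> 'a) set" where
  "line S v = (\<lambda>c. vsmult c v) ` S"

lemma mem_line_iff: "w \<in> line S v \<longleftrightarrow> (\<exists>c\<in>S. w = vsmult c v)"
  unfolding line_def by blast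

lemma mem_line_self: "subfield S \<Longrightarrow> v \<in> line S v"
  unfolding mem_line_iff using subfield_one vsmult_one by metis

lemma line_subset: "subsp S n W \<Longrightarrow> v \<in> W \<Longrightarrow> line S v \<subseteq> W"
  unfolding line_def using subsp_smult by blast

lemma span_over_singleton: "span_over S {a} = line S a"
proof (intro set_eqI iffI)
  fix v assume "v \<in> span_over S {a}"
  then obtain c where "c a \<in> S" "v = lin_comb {a} c" by (auto simp: span_over_def)
  then show "v \<in> line S a" unfolding mem_line_iff lin_comb_singleton by blast
next
  fix v assume "v \<in> line S a"
  then obtain d where d: "d \<in> S" "v = vsmult d a" unfolding mem_line_iff by blast
  then have "\<exists>c. (\<forall>x\<in>{a}. c x \<in> S) \<and> v = lin_comb {a} c"
    by (intro exI[of _ "\<lambda>_. d"]) (simp add: lin_comb_singleton)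
  then show "v \<in> span_over S {a}" by (simp add: span_over_def)
qed

lemma subsp_line:
  assumes "subfield S" "v \<in> vecs n"
  shows "subsp S n (line S v)"
  unfolding subsp_def
proof (intro conjI ballI)
  show "line S v \<subseteq> vecs n" using assms(2) vsmult_in_vecs by (auto simp: mem_line_iff)
  show "vzero \<in> line S v" unfolding mem_line_iff using subfield_zero[OF assms(1)] vsmult_zero by metis
  fix x y assume "x \<in> line S v" "y \<in> line S v"
  then obtain a b where ab: "a \<in> S" "x = vsmult a v" "b \<in> S" "y = vsmult b v"
    unfolding mem_line_iff by blast
  have "vadd x y = vsmult (a + b) v" unfolding ab by (rule ext) (simp add: vec_simps algebra_simps)
  then show "vadd x y \<in> line S v" unfolding mem_line_iff using subfield_add[OF assms(1) ab(1,3)] by blast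
next
  fix c x assume "c \<in> S" "x \<in> line S v"
  then show "vsmult c x \<in> line S v"
    unfolding mem_line_iff using subfield_mult[OF assms(1)] vsmult_vsmult by metis
qed

lemma has_dim_line:
  assumes "subfield S" "v \<in> vecs n" "v \<noteq> vzero"
  shows "has_dim S n (line S v) 1"
  unfolding has_dim_def
proof (intro conjI exI[of _ "{v}"])
  show "subsp S n (line S v)" by (rule subsp_line[OF assms(1,2)])
  show "{v} \<subseteq> line S v" using mem_line_self[OF assms(1)] by blast
  show "indep_over S {v}"
    unfolding indep_over_def lin_comb_singleton using vsmult_eq_vzero_imp assms(3) by blast
  show "span_over S {v} = line S v" by (rule span_over_singleton)
qed auto

lemma has_dim_1_imp_line:
  assumes "subfield S" "has_dim S n P 1"
  obtains v where "v \<in> vecs n" "v \<noteq> vzero" "P = line S v"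
proof -
  obtain A where A: "subsp S n P" "A \<subseteq> P" "card A = 1" "indep_over S A" "span_over S A = P"
    using assms(2) unfolding has_dim_def by blast
  then obtain a where a: "A = {a}" by (metis One_nat_def card_1_singleton_iff)
  have "a \<noteq> vzero"
  proof
    assume "a = vzero"
    then have "lin_comb A (\<lambda>_. 1) = vzero" unfolding a lin_comb_singleton by simp
    then have "(1::'a) = 0"
      using A(4)[unfolded indep_over_def, rule_format, of "\<lambda>_. 1"] subfield_one[OF assms(1)] a
      by blast
    then show False by simp
  qed
  moreover have "a \<in> vecs n" using A(1,2) a subsp_subset_vecs by blast
  moreover have "P = line S a" using A(5) a span_over_singleton by metis
  ultimately show thesis using that by blast
qed

lemma point_eq_line:
  assumes "has_dim UNIV n P 1" "w \<in> P" "w \<noteq> vzero"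
  shows "P = line UNIV w"
proof -
  obtain v where v: "P = line UNIV v" using has_dim_1_imp_line[OF subfield_UNIV assms(1)] by blast
  obtain c where c: "w = vsmult c v" using assms(2) unfolding v mem_line_iff by blast
  then have "c \<noteq> 0" using assms(3) vsmult_zero by metis
  show ?thesis unfolding v
  proof (intro set_eqI iffI)
    fix x assume "x \<in> line UNIV v"
    then obtain e where "x = vsmult e v" unfolding mem_line_iff by blast
    then have "x = vsmult (e / c) w" using \<open>c \<noteq> 0\<close> unfolding c by simp
    then show "x \<in> line UNIV w" unfolding mem_line_iff by blast
  next
    fix x assume "x \<in> line UNIV w"
    then obtain d where "x = vsmult d w" unfolding mem_line_iff by blast
    then have "x = vsmult (d * c) v" unfolding c by simp
    then show "x \<in> line UNIV v" unfolding mem_line_iff by blast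
  qed
qed

definition vplus :: "(nat \<Rightarrow> 'a::field) set \<Rightarrow> (nat \<Rightarrow> 'a) set \<Rightarrow> (nat \<Rightarrow> 'a) set" where
  "vplus A B = (\<lambda>(a, b). vadd a b) ` (A \<times> B)"

lemma card_vplus:
  assumes "subfield S" "subsp S n A" "subsp S n B" "A \<inter> B \<subseteq> {vzero}" "finite A" "finite B"
  shows "card (vplus A B) = card A * card B"
proof -
  have "inj_on (\<lambda>(a, b). vadd a b) (A \<times> B)"
  proof (rule inj_onI, clarify)
    fix a b a' b' assume ab: "a \<in> A" "b \<in> B" "a' \<in> A" "b' \<in> B" and e: "vadd a b = vadd a' b'"
    have e': "a i - a' i = b' i - b i" for i
      using fun_cong[OF e, of i] by (simp add: vadd_apply algebra_simps)
    have "(\<lambda>i. a i - a' i) \<in> A" using subsp_diff[OF assms(1,2) ab(1,3)] .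
    moreover have "(\<lambda>i. b' i - b i) \<in> B" using subsp_diff[OF assms(1,3) ab(4,2)] .
    ultimately have "(\<lambda>i. a i - a' i) \<in> A \<inter> B" using e' by simp
    then have z: "(\<lambda>i. a i - a' i) = vzero" using assms(4) by blast
    have "a = a'" using fun_cong[OF z] by (intro ext) (simp add: vzero_apply)
    moreover have "b = b'" using fun_cong[OF z] e' by (intro ext) (simp add: vzero_apply)
    ultimately show "a = a' \<and> b = b'" by simp
  qed
  then show ?thesis unfolding vplus_def using card_image card_cartesian_product by metis
qed

lemma subsps_meet_nontrivially:
  fixes A B M :: "(nat \<Rightarrow> 'a::{field,finite}) set"
  assumes "subfield S" "subsp S n A" "subsp S n B" "subsp S n M" "A \<subseteq> M" "B \<subseteq> M" "M \<noteq> vecs n"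
    and "card (vecs n :: (nat \<Rightarrow> 'a) set) \<le> card A * card B"
  shows "\<exists>v\<in>A \<inter> B. v \<noteq> vzero"
proof (rule ccontr)
  assume "\<not> (\<exists>v\<in>A \<inter> B. v \<noteq> vzero)"
  then have "card (vplus A B) = card A * card B"
    using card_vplus[OF assms(1-3) _ finite_subsp[OF assms(2)] finite_subsp[OF assms(3)]] by blast
  moreover have "vplus A B \<subseteq> M" unfolding vplus_def using assms(4-6) subsp_add by fastforce
  then have "card (vplus A B) \<le> card M" using finite_subsp[OF assms(4)] card_mono by blast
  moreover have "M \<subset> vecs n" using subsp_subset_vecs[OF assms(4)] assms(7) by blast
  then have "card M < card (vecs n :: (nat \<Rightarrow> 'a) set)" using finite_vecs psubset_card_mono by blast
  ultimately show False using assms(8) by simp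
qed

section \<open>Hyperplanes over a subfield containing hyperplanes over the field\<close>

definition adjoin :: "'a::field set \<Rightarrow> (nat \<Rightarrow> 'a) set \<Rightarrow> (nat \<Rightarrow> 'a) \<Rightarrow> (nat \<Rightarrow> 'a) set" where
  "adjoin S M u = (\<lambda>(c, m). vadd (vsmult c u) m) ` (S \<times> M)"

lemma mem_adjoin_iff: "x \<in> adjoin S M u \<longleftrightarrow> (\<exists>c\<in>S. \<exists>m\<in>M. x = vadd (vsmult c u) m)"
  unfolding adjoin_def by force

lemma adjoin_decomp_unique:
  assumes "subfield S" "subsp S n M" "u \<notin> M" "c \<in> S" "c' \<in> S" "m \<in> M" "m' \<in> M"
    and "vadd (vsmult c u) m = vadd (vsmult c' u) m'"
  shows "c = c' \<and> m = m'"
proof -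
  have e: "(c - c') * u i = m' i - m i" for i
    using fun_cong[OF assms(8), of i] by (simp add: vec_simps algebra_simps)
  have cc: "c = c'"
  proof (rule ccontr)
    assume ne: "c \<noteq> c'"
    have "u = vsmult (inverse (c - c')) (\<lambda>i. m' i - m i)"
      using e ne by (intro ext) (simp add: vsmult_apply field_simps)
    moreover have "inverse (c - c') \<in> S" using assms(1,4,5) by (intro subfield_inverse subfield_diff)
    ultimately have "u \<in> M" using subsp_smult[OF assms(2) _ subsp_diff[OF assms(1,2,7,6)]] by simp
    with assms(3) show False by simp
  qed
  moreover have "m = m'" using e cc by (intro ext) simp
  ultimately show ?thesis by simp
qed

lemma subsp_adjoin:
  assumes "subfield S" "subsp S n M" "u \<in> vecs n"
  shows "subsp S n (adjoin S M u)"
  unfolding subsp_def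
proof (intro conjI ballI)
  show "adjoin S M u \<subseteq> vecs n"
  proof
    fix x assume "x \<in> adjoin S M u"
    then obtain c m where "m \<in> M" "x = vadd (vsmult c u) m" unfolding mem_adjoin_iff by blast
    then show "x \<in> vecs n"
      using subsp_subset_vecs[OF assms(2)] by (blast intro: vadd_in_vecs vsmult_in_vecs[OF assms(3)])
  qed
  have "vzero = vadd (vsmult 0 u) vzero" by (rule ext) (simp add: vec_simps)
  then show "vzero \<in> adjoin S M u"
    unfolding mem_adjoin_iff using subfield_zero[OF assms(1)] subsp_zero[OF assms(2)] by blast
  fix x y assume "x \<in> adjoin S M u" "y \<in> adjoin S M u"
  then obtain c m d m' where cm: "c \<in> S" "m \<in> M" "x = vadd (vsmult c u) m"
    "d \<in> S" "m' \<in> M" "y = vadd (vsmult d u) m'" unfolding mem_adjoin_iff by blast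
  have "vadd x y = vadd (vsmult (c + d) u) (vadd m m')"
    unfolding cm by (rule ext) (simp add: vec_simps algebra_simps)
  then show "vadd x y \<in> adjoin S M u"
    unfolding mem_adjoin_iff using subfield_add[OF assms(1) cm(1,4)] subsp_add[OF assms(2) cm(2,5)]
    by blast
next
  fix k x assume k: "k \<in> S" and "x \<in> adjoin S M u"
  then obtain c m where cm: "c \<in> S" "m \<in> M" "x = vadd (vsmult c u) m" unfolding mem_adjoin_iff by blast
  have "vsmult k x = vadd (vsmult (k * c) u) (vsmult k m)"
    unfolding cm by (rule ext) (simp add: vec_simps algebra_simps)
  then show "vsmult k x \<in> adjoin S M u"
    unfolding mem_adjoin_iff using subfield_mult[OF assms(1) k cm(1)] subsp_smult[OF assms(2) k cm(2)]
    by blast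
qed

lemma card_adjoin:
  assumes "subfield S" "subsp S n M" "u \<notin> M" "finite S" "finite M"
  shows "card (adjoin S M u) = card S * card M"
proof -
  have "inj_on (\<lambda>(c, m). vadd (vsmult c u) m) (S \<times> M)"
    using adjoin_decomp_unique[OF assms(1-3)] by (intro inj_onI) auto
  then show ?thesis unfolding adjoin_def using card_image card_cartesian_product by metis
qed

lemma subset_adjoin: "subfield S \<Longrightarrow> M \<subseteq> adjoin S M u"
proof
  fix m assume "subfield S" "m \<in> M"
  moreover have "m = vadd (vsmult 0 u) m" by (rule ext) (simp add: vec_simps)
  ultimately show "m \<in> adjoin S M u" unfolding mem_adjoin_iff using subfield_zero by blast
qed

text \<open>A maximal proper subspace \<open>M\<close> above \<open>W\<close> has index \<open>card S\<close>: adjoining any vector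
  outside \<open>M\<close> gives a subspace of size \<open>card S * card M\<close>, which by maximality is everything.\<close>
lemma exists_hyperplane_containing:
  fixes W :: "(nat \<Rightarrow> 'a::{field,finite}) set"
  assumes "subfield S" "subsp S n W" "W \<noteq> vecs n"
  obtains M u where "subsp S n M" "W \<subseteq> M" "u \<in> vecs n" "u \<notin> M" "adjoin S M u = vecs n"
proof -
  let ?I = "{M. subsp S n M \<and> W \<subseteq> M \<and> M \<noteq> vecs n}"
  have "?I \<subseteq> Pow (vecs n)" using subsp_subset_vecs by blast
  then have fI: "finite ?I" using finite_vecs finite_subset by (metis finite_Pow_iff)
  have "W \<in> ?I" using assms by blast
  define m where "m = Max (card ` ?I)"
  have "m \<in> card ` ?I" unfolding m_def using fI \<open>W \<in> ?I\<close> by (intro Max_in) auto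
  then obtain M where M: "M \<in> ?I" "card M = m" by blast
  have Mmax: "card B \<le> card M" if "B \<in> ?I" for B
    using M(2) fI that unfolding m_def by (simp add: Max_ge)
  have Ms: "subsp S n M" "W \<subseteq> M" "M \<noteq> vecs n" using M(1) by auto
  then obtain u where u: "u \<in> vecs n" "u \<notin> M" using subsp_subset_vecs by blast
  let ?N = "adjoin S M u"
  have fM: "finite M" using finite_subsp[OF Ms(1)] .
  have "card M > 0" using fM subsp_zero[OF Ms(1)] card_gt_0_iff by blast
  then have lt: "card M < card ?N"
    using card_adjoin[OF assms(1) Ms(1) u(2) finite fM] two_le_card_subfield[OF assms(1)] by simp
  have "?N = vecs n"
  proof (rule ccontr)
    assume "?N \<noteq> vecs n"
    then have "?N \<in> ?I"
      using subsp_adjoin[OF assms(1) Ms(1) u(1)] Ms(2) subset_adjoin[OF assms(1)] by blast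
    then have "card ?N \<le> card M" by (rule Mmax)
    with lt show False by simp
  qed
  then show thesis using that Ms u by blast
qed

lemma card_le_card_image_mult:
  assumes "finite X" "\<And>y. y \<in> f ` X \<Longrightarrow> card {x\<in>X. f x = y} \<le> k"
  shows "card X \<le> card (f ` X) * k"
proof -
  have "X = (\<Union>y\<in>f ` X. {x\<in>X. f x = y})" by blast
  then have "card X = card (\<Union>y\<in>f ` X. {x\<in>X. f x = y})" by simp
  also have "\<dots> \<le> (\<Sum>y\<in>f ` X. card {x\<in>X. f x = y})"
    by (rule card_UN_le) (simp add: assms(1))
  also have "\<dots> \<le> card (f ` X) * k"
    using sum_bounded_above[of "f ` X" "\<lambda>y. card {x\<in>X. f x = y}" k] assms(2) by simp
  finally show ?thesis .
qed

locale adjoin_decomposition =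
  fixes S :: "'a::{field,finite} set" and n :: nat and M :: "(nat \<Rightarrow> 'a) set" and u :: "nat \<Rightarrow> 'a"
  assumes subfield: "subfield S" and subsp: "subsp S n M" and u_in_vecs: "u \<in> vecs n"
    and u_notin: "u \<notin> M" and adjoin_eq: "adjoin S M u = vecs n"
begin

definition coord :: "(nat \<Rightarrow> 'a) \<Rightarrow> 'a" where
  "coord x = (THE c. c \<in> S \<and> (\<exists>m\<in>M. x = vadd (vsmult c u) m))"

lemma coord_eq:
  assumes "c \<in> S" "m \<in> M" "x = vadd (vsmult c u) m"
  shows "coord x = c"
  unfolding coord_def
proof (rule the_equality)
  show "c \<in> S \<and> (\<exists>m\<in>M. x = vadd (vsmult c u) m)" using assms by blast
  fix d assume "d \<in> S \<and> (\<exists>m\<in>M. x = vadd (vsmult d u) m)"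
  then show "d = c" using adjoin_decomp_unique[OF subfield subsp u_notin] assms by metis
qed

lemma coord_decomp:
  assumes "x \<in> vecs n"
  obtains m where "m \<in> M" "x = vadd (vsmult (coord x) u) m"
proof -
  have "x \<in> adjoin S M u" using assms adjoin_eq by simp
  then obtain c m where cm: "c \<in> S" "m \<in> M" "x = vadd (vsmult c u) m"
    unfolding mem_adjoin_iff by blast
  then have "coord x = c" by (rule coord_eq)
  then show thesis using that cm by simp
qed

lemma coord_in:
  assumes "x \<in> vecs n"
  shows "coord x \<in> S"
proof -
  have "x \<in> adjoin S M u" using assms adjoin_eq by simp
  then obtain c m where cm: "c \<in> S" "m \<in> M" "x = vadd (vsmult c u) m"
    unfolding mem_adjoin_iff by blast
  then have "coord x = c" by (rule coord_eq)
  then show ?thesis using cm by simp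
qed

lemma coord_vadd:
  assumes "x \<in> vecs n" "y \<in> vecs n"
  shows "coord (vadd x y) = coord x + coord y"
proof -
  obtain m where m: "m \<in> M" "x = vadd (vsmult (coord x) u) m" using coord_decomp[OF assms(1)] .
  obtain m' where m': "m' \<in> M" "y = vadd (vsmult (coord y) u) m'" using coord_decomp[OF assms(2)] .
  have "vadd x y = vadd (vsmult (coord x + coord y) u) (vadd m m')"
    by (subst m(2), subst m'(2), rule ext) (simp add: vec_simps algebra_simps)
  then show ?thesis
    by (rule coord_eq[OF subfield_add[OF subfield coord_in[OF assms(1)] coord_in[OF assms(2)]]
          subsp_add[OF subsp m(1) m'(1)]])
qed

lemma coord_vsmult:
  assumes "a \<in> S" "x \<in> vecs n"
  shows "coord (vsmult a x) = a * coord x"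
proof -
  obtain m where m: "m \<in> M" "x = vadd (vsmult (coord x) u) m" using coord_decomp[OF assms(2)] .
  have "vsmult a x = vadd (vsmult (a * coord x) u) (vsmult a m)"
    by (subst m(2), rule ext) (simp add: vec_simps algebra_simps)
  then show ?thesis
    by (rule coord_eq[OF subfield_mult[OF subfield assms(1) coord_in[OF assms(2)]]
          subsp_smult[OF subsp assms(1) m(1)]])
qed

lemma coord_eq_0_iff:
  assumes "x \<in> vecs n"
  shows "coord x = 0 \<longleftrightarrow> x \<in> M"
proof
  assume "x \<in> M"
  moreover have "x = vadd (vsmult 0 u) x" by (rule ext) (simp add: vec_simps)
  ultimately show "coord x = 0" using coord_eq[OF subfield_zero[OF subfield]] by blast
next
  assume "coord x = 0"
  moreover obtain m where "m \<in> M" "x = vadd (vsmult (coord x) u) m" using coord_decomp[OF assms] .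
  ultimately have "x = m" by (intro ext) (simp add: vec_simps)
  with \<open>m \<in> M\<close> show "x \<in> M" by simp
qed

lemma coord_diff:
  assumes "x \<in> vecs n" "y \<in> vecs n"
  shows "coord (\<lambda>i. x i - y i) = coord x - coord y"
proof -
  have "x = vadd (\<lambda>i. x i - y i) y" by (rule ext) (simp add: vec_simps)
  then have "coord x = coord (\<lambda>i. x i - y i) + coord y"
    using coord_vadd[OF vdiff_in_vecs[OF assms] assms(2)] by simp
  then show ?thesis by simp
qed

lemma coord_vsmult_sum:
  assumes "finite E" "\<forall>e\<in>E. f e \<in> S" "z \<in> vecs n"
  shows "coord (vsmult (\<Sum>e\<in>E. f e * e) z) = (\<Sum>e\<in>E. f e * coord (vsmult e z))"
  using assms(1,2)
proof (induction E rule: finite_induct)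
  case empty
  show ?case using coord_eq_0_iff[of vzero] subsp_zero[OF subsp] subsp_subset_vecs[OF subsp] by auto
next
  case (insert x F)
  have "vsmult (\<Sum>e\<in>insert x F. f e * e) z = vadd (vsmult (f x) (vsmult x z)) (vsmult (\<Sum>e\<in>F. f e * e) z)"
    using insert(1,2) by (intro ext) (simp add: vec_simps algebra_simps)
  then show ?case
    using insert coord_vadd[OF vsmult_in_vecs[OF vsmult_in_vecs[OF assms(3)]] vsmult_in_vecs[OF assms(3)]]
      coord_vsmult[OF _ vsmult_in_vecs[OF assms(3)]] by simp
qed

definition core :: "(nat \<Rightarrow> 'a) set" where
  "core = {x \<in> vecs n. \<forall>c. vsmult c x \<in> M}"

lemma core_subset: "core \<subseteq> M"
proof
  fix x assume "x \<in> core"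
  then have "vsmult 1 x \<in> M" unfolding core_def by blast
  then show "x \<in> M" by simp
qed

lemma subsp_core: "subsp UNIV n core"
  unfolding subsp_def
proof (intro conjI ballI)
  show "core \<subseteq> vecs n" unfolding core_def by blast
  show "vzero \<in> core"
    unfolding core_def using subsp_zero[OF subsp] by (simp add: mem_vecs_iff vzero_apply)
next
  fix x y assume "x \<in> core" "y \<in> core"
  moreover have "vsmult c (vadd x y) = vadd (vsmult c x) (vsmult c y)" for c
    by (rule ext) (simp add: vec_simps algebra_simps)
  ultimately show "vadd x y \<in> core"
    unfolding core_def using vadd_in_vecs subsp_add[OF subsp] by auto
next
  fix k x assume "x \<in> core"
  then show "vsmult k x \<in> core" unfolding core_def using vsmult_in_vecs by auto
qed

definition profile :: "'a set \<Rightarrow> (nat \<Rightarrow> 'a) \<Rightarrow> 'a \<Rightarrow> 'a" where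
  "profile E x = restrict (\<lambda>e. coord (vsmult e x)) E"

lemma profile_in: "x \<in> vecs n \<Longrightarrow> profile E x \<in> E \<rightarrow>\<^sub>E S"
  unfolding profile_def using coord_in[OF vsmult_in_vecs] by simp

lemma diff_in_core_if_profile_eq:
  assumes "finite E" "\<forall>k. \<exists>f. (\<forall>e\<in>E. f e \<in> S) \<and> k = (\<Sum>e\<in>E. f e * e)"
    and "x \<in> vecs n" "y \<in> vecs n" "profile E x = profile E y"
  shows "(\<lambda>i. x i - y i) \<in> core"
proof -
  have d: "(\<lambda>i. x i - y i) \<in> vecs n" using vdiff_in_vecs[OF assms(3,4)] .
  have "coord (vsmult e (\<lambda>i. x i - y i)) = 0" if "e \<in> E" for e
  proof -
    have "vsmult e (\<lambda>i. x i - y i) = (\<lambda>i. vsmult e x i - vsmult e y i)"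
      by (rule ext) (simp add: vec_simps algebra_simps)
    then show ?thesis
      using coord_diff[OF vsmult_in_vecs[OF assms(3)] vsmult_in_vecs[OF assms(4)]]
        fun_cong[OF assms(5), of e] that unfolding profile_def by simp
  qed
  moreover have "coord (vsmult c (\<lambda>i. x i - y i)) = (\<Sum>e\<in>E. f e * coord (vsmult e (\<lambda>i. x i - y i)))"
    if "\<forall>e\<in>E. f e \<in> S" "c = (\<Sum>e\<in>E. f e * e)" for c f
    unfolding that(2) by (rule coord_vsmult_sum[OF assms(1) that(1) d])
  ultimately have "coord (vsmult c (\<lambda>i. x i - y i)) = 0" for c
    using assms(2)[rule_format, of c] by auto
  then show ?thesis unfolding core_def using d coord_eq_0_iff vsmult_in_vecs by blast
qed

text \<open>\<open>profile E\<close> is \<open>S\<close>-linear with kernel \<open>core\<close>, so \<open>core\<close> has index at most \<open>card S ^ card E\<close>.\<close>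
lemma card_vecs_le_core:
  assumes "finite E" "\<forall>k. \<exists>f. (\<forall>e\<in>E. f e \<in> S) \<and> k = (\<Sum>e\<in>E. f e * e)"
  shows "card (vecs n :: (nat \<Rightarrow> 'a) set) \<le> card S ^ card E * card core"
proof -
  have fiber_card: "card {x\<in>vecs n. profile E x = y} \<le> card core" if y: "y \<in> profile E ` vecs n" for y
  proof -
    obtain x0 where x0: "x0 \<in> vecs n" "y = profile E x0" using y by blast
    have "{x\<in>vecs n. profile E x = y} \<subseteq> vadd x0 ` core"
    proof
      fix x assume "x \<in> {x\<in>vecs n. profile E x = y}"
      then have x: "x \<in> vecs n" "profile E x = profile E x0" using x0 by auto
      have "x = vadd x0 (\<lambda>i. x i - x0 i)" by (rule ext) (simp add: vec_simps)
      then show "x \<in> vadd x0 ` core" using diff_in_core_if_profile_eq[OF assms x(1) x0(1) x(2)] by blast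
    qed
    then have "card {x\<in>vecs n. profile E x = y} \<le> card (vadd x0 ` core)"
      using finite_subsp[OF subsp_core] by (intro card_mono) auto
    also have "\<dots> \<le> card core" using card_image_le[OF finite_subsp[OF subsp_core]] .
    finally show ?thesis .
  qed
  have "card (vecs n :: (nat \<Rightarrow> 'a) set) \<le> card (profile E ` vecs n) * card core"
    by (rule card_le_card_image_mult[OF finite_vecs fiber_card])
  also have "card (profile E ` vecs n) \<le> card (E \<rightarrow>\<^sub>E S)"
    using profile_in by (intro card_mono finite_PiE assms(1)) auto
  also have "card (E \<rightarrow>\<^sub>E S) = card S ^ card E" using card_PiE[OF assms(1), of "\<lambda>_. S"] by simp
  finally show ?thesis by simp
qed

lemma has_dim_core:
  assumes "finite E" "card E = t" "\<forall>k. \<exists>f. (\<forall>e\<in>E. f e \<in> S) \<and> k = (\<Sum>e\<in>E. f e * e)"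
    and "card (UNIV :: 'a set) = card S ^ t"
  shows "has_dim UNIV n core (n - 1)"
proof -
  let ?Q = "card (UNIV :: 'a set)"
  obtain k where k: "card core = ?Q ^ k" using subsp_card_eq_power[OF subfield_UNIV subsp_core] by blast
  have Q: "1 < ?Q" using two_le_card_subfield[of "UNIV :: 'a set", OF subfield_UNIV] by linarith
  have "M \<subset> vecs n" using subsp_subset_vecs[OF subsp] u_in_vecs u_notin by blast
  then have "card M < card (vecs n :: (nat \<Rightarrow> 'a) set)" using finite_vecs psubset_card_mono by blast
  moreover have "card core \<le> card M" using core_subset finite_subsp[OF subsp] card_mono by blast
  ultimately have "?Q ^ k < ?Q ^ n" using k card_vecs by (metis order.strict_trans1)
  then have "k < n" using Q power_less_imp_less_exp by blast
  moreover have "?Q ^ n \<le> ?Q ^ Suc k"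
    using card_vecs_le_core[OF assms(1,3)] assms(2,4) k card_vecs[where 'a = 'a, of n] by simp
  then have "n \<le> Suc k" using Q power_le_imp_le_exp by blast
  ultimately have "k = n - 1" by simp
  then show ?thesis using has_dim_iff_card[OF subfield_UNIV subsp_core] k by simp
qed

end

lemma exists_spanning_set_over_subfield:
  fixes S :: "'a::{field,finite} set"
  assumes "subfield S" "card (UNIV :: 'a set) = card S ^ t"
  obtains E :: "'a set"
    where "finite E" "card E = t" "\<forall>k. \<exists>f. (\<forall>e\<in>E. f e \<in> S) \<and> k = (\<Sum>e\<in>E. f e * e)"
proof -
  have "card (vecs 1 :: (nat \<Rightarrow> 'a) set) = card S ^ t"
    using card_vecs[where 'a = 'a, of 1] assms(2) by simp
  then have "has_dim S 1 (vecs 1 :: (nat \<Rightarrow> 'a) set) t"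
    using has_dim_iff_card[OF assms(1) subsp_vecs] by blast
  then obtain A where A: "finite A" "A \<subseteq> vecs 1" "card A = t" "span_over S A = (vecs 1 :: (nat \<Rightarrow> 'a) set)"
    unfolding has_dim_def by blast
  have inj: "inj_on (\<lambda>a. a 0) A"
  proof (rule inj_onI)
    fix a b assume ab: "a \<in> A" "b \<in> A" "a 0 = b 0"
    show "a = b"
    proof
      fix i
      have "a \<in> vecs 1" "b \<in> vecs 1" using A(2) ab(1,2) by auto
      then show "a i = b i" using ab(3) unfolding mem_vecs_iff by (metis One_nat_def Suc_leI neq0_conv)
    qed
  qed
  have "\<exists>f. (\<forall>e\<in>(\<lambda>a. a 0) ` A. f e \<in> S) \<and> k = (\<Sum>e\<in>(\<lambda>a. a 0) ` A. f e * e)" for k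
  proof -
    have "(\<lambda>i. if i = 0 then k else 0) \<in> span_over S A" unfolding A(4) by (simp add: mem_vecs_iff)
    then obtain c where c: "\<forall>a\<in>A. c a \<in> S" "(\<lambda>i. if i = 0 then k else 0) = lin_comb A c"
      unfolding span_over_def by blast
    let ?f = "\<lambda>x. c (inv_into A (\<lambda>a. a 0) x)"
    have "k = (\<Sum>a\<in>A. c a * a 0)" using fun_cong[OF c(2), of 0] by (simp add: lin_comb_apply)
    also have "\<dots> = (\<Sum>a\<in>A. ?f (a 0) * a 0)" using inv_into_f_f[OF inj] by simp
    also have "\<dots> = (\<Sum>e\<in>(\<lambda>a. a 0) ` A. ?f e * e)" by (simp add: sum.reindex[OF inj])
    finally show ?thesis using c(1) inv_into_into[of _ "\<lambda>a. a 0" A] by (intro exI[of _ ?f]) auto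
  qed
  then show thesis using that[of "(\<lambda>a. a 0) ` A"] A(1,3) card_image[OF inj] by blast
qed

text \<open>Take \<open>M\<close> a maximal proper \<open>S\<close>-subspace above \<open>W\<close> and \<open>C\<close> the largest subspace over the
  big field inside \<open>M\<close>.\<close>
lemma exists_proper_subsp_containing_field_hyperplane:
  fixes W :: "(nat \<Rightarrow> 'a::{field,finite}) set"
  assumes "subfield S" "card (UNIV :: 'a set) = card S ^ t" "subsp S n W" "W \<noteq> vecs n"
  obtains C M where "has_dim UNIV n C (n - 1)" "subsp S n M" "W \<subseteq> M" "C \<subseteq> M" "M \<noteq> vecs n"
proof -
  obtain M u where M: "subsp S n M" "W \<subseteq> M" "u \<in> vecs n" "u \<notin> M" "adjoin S M u = vecs n"
    using exists_hyperplane_containing[OF assms(1,3,4)] by blast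
  interpret adjoin_decomposition S n M u
    using assms(1) M by (intro adjoin_decomposition.intro) auto
  obtain E where "finite E" "card E = t" "\<forall>k. \<exists>f. (\<forall>e\<in>E. f e \<in> S) \<and> k = (\<Sum>e\<in>E. f e * e)"
    using exists_spanning_set_over_subfield[OF assms(1,2)] by blast
  from has_dim_core[OF this assms(2)] show thesis
    using that core_subset M by blast
qed

lemma has_dim_over_subfield:
  fixes H :: "(nat \<Rightarrow> 'a::{field,finite}) set"
  assumes "subfield F" "card (UNIV :: 'a set) = card F ^ t" "has_dim UNIV n H d"
  shows "has_dim F n H (d * t)"
proof -
  have "card H = (card F ^ t) ^ d"
    using card_has_dim[OF subfield_UNIV finite assms(3)] assms(2) by simp
  then have "card H = card F ^ (d * t)" by (simp add: power_mult[symmetric] mult.commute)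
  moreover have "subsp F n H" using assms(3) subsp_UNIV_imp_subsp unfolding has_dim_def by blast
  ultimately show ?thesis using has_dim_iff_card[OF assms(1)] by blast
qed

section \<open>Field reduction of blocking sets\<close>

lemma blocks_subpoints:
  fixes B :: "(nat \<Rightarrow> 'a::{field,finite}) set set"
  assumes "subfield F" "card (UNIV :: 'a set) = card F ^ t" "1 \<le> n" "1 \<le> t"
    and "blocks UNIV n (n - 1) B"
  shows "blocks F n ((n - 1) * t) {Q \<in> proj_points F n. \<exists>P\<in>B. Q \<subseteq> P}"
  unfolding blocks_def
proof (intro conjI allI impI)
  let ?V = "vecs n :: (nat \<Rightarrow> 'a) set"
  have cV: "card ?V = card F ^ (n * t)"
    using card_vecs[where 'a = 'a, of n] assms(2) by (simp add: power_mult[symmetric] mult.commute)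
  fix W assume W: "has_dim F n W ((n - 1) * t)"
  have Ws: "subsp F n W" using W unfolding has_dim_def by blast
  have cW: "card W = card F ^ ((n - 1) * t)" using card_has_dim[OF assms(1) finite W] .
  have "card W < card ?V"
    unfolding cW cV using two_le_card_subfield[OF assms(1)] assms(3,4) by (simp add: power_strict_increasing)
  then obtain C M where CM: "has_dim UNIV n C (n - 1)" "subsp F n M" "W \<subseteq> M" "C \<subseteq> M" "M \<noteq> ?V"
    using exists_proper_subsp_containing_field_hyperplane[OF assms(1,2) Ws] by blast
  obtain P where P: "P \<in> B" "P \<subseteq> C" using assms(5) CM(1) unfolding blocks_def by blast
  have Pd: "has_dim UNIV n P 1" using P(1) assms(5) unfolding blocks_def proj_points_def by blast
  have Ps: "subsp F n P" using Pd subsp_UNIV_imp_subsp unfolding has_dim_def by blast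
  have "card P * card W = card F ^ (t + (n - 1) * t)"
    using card_has_dim[OF subfield_UNIV finite Pd] assms(2) cW by (simp add: power_add)
  also have "t + (n - 1) * t = n * t" using assms(3) by (cases n) auto
  finally obtain v where v: "v \<in> P" "v \<in> W" "v \<noteq> vzero"
    using subsps_meet_nontrivially[OF assms(1) Ps Ws CM(2) _ CM(3,5)] P(2) CM(4) cV by force
  have "line F v \<in> proj_points F n"
    unfolding proj_points_def using has_dim_line[OF assms(1) _ v(3)] v(1) subsp_subset_vecs[OF Ps] by blast
  moreover have "line F v \<subseteq> P" "line F v \<subseteq> W" using line_subset[OF Ps v(1)] line_subset[OF Ws v(2)] .
  ultimately show "\<exists>Q\<in>{Q \<in> proj_points F n. \<exists>P\<in>B. Q \<subseteq> P}. Q \<subseteq> W" using P(1) by blast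
qed auto

lemma BU_subset:
  assumes "subfield F" "B \<subseteq> proj_points UNIV n" "\<forall>Q\<in>B'. Q \<in> proj_points F n \<and> (\<exists>P\<in>B. Q \<subseteq> P)"
  shows "BU n B' \<subseteq> B"
proof
  fix P assume "P \<in> BU n B'"
  then obtain Q where PQ: "has_dim UNIV n P 1" "Q \<in> B'" "Q \<subseteq> P"
    unfolding BU_def proj_points_def by blast
  obtain P0 where P0: "P0 \<in> B" "Q \<subseteq> P0" using assms(3) PQ(2) by blast
  have "has_dim F n Q 1" using assms(3) PQ(2) unfolding proj_points_def by blast
  then obtain v where v: "v \<noteq> vzero" "Q = line F v" using has_dim_1_imp_line[OF assms(1)] by metis
  have "v \<in> Q" using v(2) mem_line_self[OF assms(1)] by blast
  moreover have "has_dim UNIV n P0 1" using P0(1) assms(2) unfolding proj_points_def by blast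
  ultimately have "P = P0" using point_eq_line PQ(1,3) P0(2) v(1) by blast
  with P0(1) show "P \<in> B" by simp
qed

lemma blocks_BU:
  fixes B' :: "(nat \<Rightarrow> 'a::{field,finite}) set set"
  assumes "subfield F" "card (UNIV :: 'a set) = card F ^ t" "blocks F n (d * t) B'"
  shows "blocks UNIV n d (BU n B')"
  unfolding blocks_def
proof (intro conjI allI impI)
  fix H :: "(nat \<Rightarrow> 'a) set" assume H: "has_dim UNIV n H d"
  have Hs: "subsp UNIV n H" using H unfolding has_dim_def by blast
  obtain Q where Q: "Q \<in> B'" "Q \<subseteq> H"
    using assms(3) has_dim_over_subfield[OF assms(1,2) H] unfolding blocks_def by blast
  have "has_dim F n Q 1" using assms(3) Q(1) unfolding blocks_def proj_points_def by blast
  then obtain v where v: "v \<in> vecs n" "v \<noteq> vzero" "Q = line F v"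
    using has_dim_1_imp_line[OF assms(1)] by metis
  have "v \<in> Q" using v(3) mem_line_self[OF assms(1)] by blast
  then have "line UNIV v \<subseteq> H" using line_subset[OF Hs] Q(2) by blast
  moreover have "Q \<subseteq> line UNIV v"
    unfolding v(3) using line_subset[OF subsp_line[OF subfield_UNIV v(1)] mem_line_self[OF subfield_UNIV]]
    by (auto simp: mem_line_iff)
  moreover have "line UNIV v \<in> proj_points UNIV n"
    unfolding proj_points_def using has_dim_line[OF subfield_UNIV v(1,2)] by simp
  ultimately show "\<exists>P\<in>BU n B'. P \<subseteq> H" unfolding BU_def using Q(1) by blast
qed (auto simp: BU_def)

lemma exists_min_blocking_subset:
  fixes B :: "(nat \<Rightarrow> 'a::{field,finite}) set set"
  assumes "blocks S n d B"
  obtains B' where "B' \<subseteq> B" "min_blocking S n d B'"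
proof -
  let ?X = "{X. X \<subseteq> B \<and> blocks S n d X}"
  have "B \<subseteq> Pow (vecs n)"
  proof
    fix P assume "P \<in> B"
    then have "has_dim S n P 1" using assms unfolding blocks_def proj_points_def by blast
    then show "P \<in> Pow (vecs n)" unfolding has_dim_def using subsp_subset_vecs by blast
  qed
  then have fB: "finite B" using finite_vecs finite_subset by (metis finite_Pow_iff)
  then have fX: "finite ?X" by simp
  define m where "m = Min (card ` ?X)"
  have "B \<in> ?X" using assms by blast
  then have "m \<in> card ` ?X" unfolding m_def using fX by (intro Min_in) auto
  then obtain B' where B': "B' \<in> ?X" "card B' = m" by blast
  have B'min: "card B' \<le> card X" if "X \<in> ?X" for X
    using B'(2) fX that unfolding m_def by (simp add: Min_le)
  have "\<not> blocks S n d B0" if "B0 \<subset> B'" for B0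
  proof
    assume "blocks S n d B0"
    then have "card B' \<le> card B0" using B'(1) that by (intro B'min) auto
    moreover have "card B0 < card B'" using psubset_card_mono[OF _ that] B'(1) fB finite_subset by blast
    ultimately show False by simp
  qed
  then show thesis using that B'(1) unfolding min_blocking_def by blast
qed

theorem theorem5p1:
  fixes F :: "'a::{field,finite} set" and n t :: nat
    and B :: "(nat \<Rightarrow> 'a) set set"
  assumes "subfield F"
    and "n \<ge> 2" and "t \<ge> 1"
    and "card (UNIV :: 'a set) = card F ^ t"
    and "min_blocking UNIV n (n - 1) B"
  shows "\<exists>B'. min_blocking F n (n * t - t) B' \<and> B = BU n B'"
proof -
  have dim: "n * t - t = (n - 1) * t" by (simp add: diff_mult_distrib)
  have B: "blocks UNIV n (n - 1) B" and B_min: "\<And>B0. B0 \<subset> B \<Longrightarrow> \<not> blocks UNIV n (n - 1) B0"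
    using assms(5) unfolding min_blocking_def by blast+
  define B'' where "B'' = {Q \<in> proj_points F n. \<exists>P\<in>B. Q \<subseteq> P}"
  have "blocks F n ((n - 1) * t) B''"
    unfolding B''_def using blocks_subpoints[OF assms(1,4) _ assms(3) B] assms(2) by simp
  then obtain B' where B': "B' \<subseteq> B''" "min_blocking F n ((n - 1) * t) B'"
    by (rule exists_min_blocking_subset)
  have "BU n B' \<subseteq> B"
    using BU_subset[OF assms(1)] B B'(1) unfolding blocks_def B''_def by blast
  moreover have "blocks UNIV n (n - 1) (BU n B')"
    using blocks_BU[OF assms(1,4)] B'(2) unfolding min_blocking_def by blast
  ultimately have "B = BU n B'" using B_min by blast
  with B'(2) show ?thesis unfolding dim by blast
qed

end
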